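(* Let $M$ be a nontrivial monoid in $\mathcal{C}$ and let $V=\mathbb{R}\otimes_\mathbb{Z}\mathrm{gp}(M)$. The following are equivalent: (a) $M$ is primary; (b) the only face submonoids of $M$ are $\{0\}$ and $M$; (c) $\mathsf{cone}_V(M)\setminus\{0\}$ is an open subset of $V$.
   Context: Convention: all monoids are commutative, cancellative, and reduced, written additively; $M^\bullet=M\setminus\{0\}$. $\mathcal{C}$ is the class of monoids isomorphic to a submonoid of a free commutative monoid of finite rank (equivalently, of $(\mathbb{N}^d,+)$). $M$ is regarded as a submonoid of $V$ via $M\hookrightarrow\mathrm{gp}(M)\hookrightarrow V$, and $V$ carries its Euclidean topology; $\mathsf{cone}_V(M)$ is the set of finite nonnegative linear combinations of elements of $M$. A face of a cone $C$ is a cone $F\subseteq C$ such that whenever $x,y\in C$ and $F$ meets the open segment between $x$ and $y$, then $x,y\in F$; a face submonoid is $M\cap F$ for a face $F$ of $\mathsf{cone}_V(M)$. $M$ is primary if $M$ is nontrivial and for all $x,y\in M^\bullet$ there is $n\in\mathbb{N}$ with $ny\in x+M$. *)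

theory Defs
  imports "HOL-Analysis.Analysis"
begin

text \<open>A monoid in the class C, realised concretely as a submonoid of (N^d,+),
  embedded into R^d.  Here d = CARD('n).\<close>
definition submonoid_Nd :: "(real ^ 'n) set \<Rightarrow> bool" where
  "submonoid_Nd M \<longleftrightarrow> 0 \<in> M \<and> (\<forall>x\<in>M. \<forall>y\<in>M. x + y \<in> M)
     \<and> (\<forall>x\<in>M. \<forall>i. x $ i \<in> \<nat>)"

definition primary :: "(real ^ 'n) set \<Rightarrow> bool" where
  "primary M \<longleftrightarrow> M \<noteq> {0} \<and>
     (\<forall>x\<in>M - {0}. \<forall>y\<in>M - {0}. \<exists>n::nat. \<exists>m\<in>M. of_nat n *\<^sub>R y = x + m)"

definition mcone :: "(real ^ 'n) set \<Rightarrow> (real ^ 'n) set" where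
  "mcone M = {\<Sum>x\<in>S. c x *\<^sub>R x | S c. finite S \<and> S \<subseteq> M \<and> (\<forall>x\<in>S. c x \<ge> 0)}"

definition face_of_cone :: "(real ^ 'n) set \<Rightarrow> (real ^ 'n) set \<Rightarrow> bool" where
  "face_of_cone F C \<longleftrightarrow> convex_cone F \<and> F \<subseteq> C \<and>
     (\<forall>x\<in>C. \<forall>y\<in>C. F \<inter> open_segment x y \<noteq> {} \<longrightarrow> x \<in> F \<and> y \<in> F)"

definition face_submonoid :: "(real ^ 'n) set \<Rightarrow> (real ^ 'n) set \<Rightarrow> bool" where
  "face_submonoid N M \<longleftrightarrow> (\<exists>F. face_of_cone F (mcone M) \<and> N = M \<inter> F)"

end

theory Submission
  imports Defs
begin

text \<open>All three conditions are equivalent to: every nonzero point of the cone C generated by M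
  lies in the relative interior of C, whose affine hull is span M.  For the faces, a face containing
  a relative interior point is all of C, while a nonzero relative boundary point of C lies on a
  supporting hyperplane whose face contains a nonzero element of M but, as the hyperplane does not
  contain C, not all of M.  For primarity, a point v of a convex cone is relatively interior iff
  v - s w stays in the cone for some s > 0, for every w in the cone; primarity, n x = y + k, gives
  this for generators.  Conversely, if y - \<epsilon> x is a nonnegative combination \<Sum> c m m of
  elements of M, the integer vectors n y - \<lfloor>n \<epsilon>\<rfloor> x - \<Sum> \<lfloor>n c m\<rfloor> m are bounded,
  so two of them with n far apart coincide; subtracting gives D y = k x + \<Sum> d m m with k \<ge> 1.\<close>

lemma convex_cone_hull_explicit:
  fixes S :: "'a::real_vector set"
  shows "convex_cone hull S =
    {\<Sum>x\<in>T. c x *\<^sub>R x | T c. finite T \<and> T \<subseteq> S \<and> (\<forall>x\<in>T. 0 \<le> c x)}"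
proof (intro subset_antisym subsetI)
  fix v assume "v \<in> convex_cone hull S"
  then consider "v = 0" | u c where "u \<in> convex hull S" "0 \<le> c" "v = c *\<^sub>R u"
    unfolding convex_cone_hull_convex_hull by blast
  then show "v \<in> {\<Sum>x\<in>T. c x *\<^sub>R x | T c. finite T \<and> T \<subseteq> S \<and> (\<forall>x\<in>T. 0 \<le> c x)}"
  proof cases
    case 1
    then show ?thesis by (intro CollectI exI[of _ "{}"]) auto
  next
    case (2 u c)
    then obtain T w where "finite T" "T \<subseteq> S" "\<forall>x\<in>T. 0 \<le> w x" "u = (\<Sum>x\<in>T. w x *\<^sub>R x)"
      unfolding convex_hull_explicit by blast
    with 2 show ?thesis
      by (intro CollectI exI[of _ T] exI[of _ "\<lambda>x. c * w x"]) (auto simp: scaleR_sum_right)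
  qed
next
  fix v assume "v \<in> {\<Sum>x\<in>T. c x *\<^sub>R x | T c. finite T \<and> T \<subseteq> S \<and> (\<forall>x\<in>T. 0 \<le> c x)}"
  then obtain T c where T: "finite T" "T \<subseteq> S" "\<forall>x\<in>T. 0 \<le> c x" and v: "v = (\<Sum>x\<in>T. c x *\<^sub>R x)"
    by blast
  from T show "v \<in> convex_cone hull S" unfolding v
    by (induction T rule: finite_induct)
       (auto intro: convex_cone_hull_contains_0 convex_cone_hull_add convex_cone_hull_mul hull_inc)
qed

lemma affine_hull_convex_cone_hull: "affine hull (convex_cone hull S) = span S"
proof -
  have "span (convex_cone hull S) = span S"
  proof (rule subset_antisym)
    have "convex_cone hull S \<subseteq> span S"
      by (simp add: convex_cone_span hull_minimal span_superset)
    then show "span (convex_cone hull S) \<subseteq> span S"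
      using span_mono span_span by blast
    show "span S \<subseteq> span (convex_cone hull S)"
      by (simp add: hull_subset span_mono)
  qed
  then show ?thesis
    by (simp add: affine_hull_span_0 convex_cone_hull_contains_0 hull_inc)
qed

lemma openin_delete_iff_subset_rel_interior:
  fixes S :: "'a::euclidean_space set"
  shows "openin (top_of_set (affine hull S)) (S - {a}) \<longleftrightarrow> S - {a} \<subseteq> rel_interior S"
proof
  assume "S - {a} \<subseteq> rel_interior S"
  then have "S - {a} = rel_interior S \<inter> - {a}"
    using rel_interior_subset by auto
  then show "openin (top_of_set (affine hull S)) (S - {a})"
    by (simp add: openin_Int_open openin_rel_interior open_Compl)
qed (simp add: rel_interior_maximal)

definition absorbs :: "'a::real_vector set \<Rightarrow> 'a \<Rightarrow> 'a \<Rightarrow> bool" where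
  "absorbs C v w \<longleftrightarrow> (\<exists>s>0. v - s *\<^sub>R w \<in> C)"

lemma absorbs_trans:
  assumes "convex_cone C" "absorbs C u v" "absorbs C v w"
  shows "absorbs C u w"
proof -
  obtain s t where "s > 0" "u - s *\<^sub>R v \<in> C" "t > 0" "v - t *\<^sub>R w \<in> C"
    using assms(2,3) unfolding absorbs_def by blast
  moreover have "u - (s * t) *\<^sub>R w = (u - s *\<^sub>R v) + s *\<^sub>R (v - t *\<^sub>R w)"
    by (simp add: algebra_simps)
  ultimately show ?thesis
    unfolding absorbs_def using assms(1)
    by (metis convex_cone_add convex_cone_scaleR less_eq_real_def mult_pos_pos)
qed

lemma absorbs_self: "0 \<in> C \<Longrightarrow> absorbs C v v"
  unfolding absorbs_def by (intro exI[of _ 1]) auto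

lemma absorbs_zero: "v \<in> C \<Longrightarrow> absorbs C v 0"
  unfolding absorbs_def by (intro exI[of _ 1]) auto

lemma absorbs_scaleR_right:
  assumes "absorbs C v w" "0 < c"
  shows "absorbs C v (c *\<^sub>R w)"
proof -
  obtain s where "s > 0" "v - s *\<^sub>R w \<in> C"
    using assms(1) unfolding absorbs_def by blast
  then show ?thesis
    unfolding absorbs_def using assms(2) by (intro exI[of _ "s / c"]) auto
qed

lemma absorbs_add_right:
  assumes "convex C" "v \<in> C" "absorbs C v a" "absorbs C v b"
  shows "absorbs C v (a + b)"
proof -
  obtain sa sb where "sa > 0" "v - sa *\<^sub>R a \<in> C" "sb > 0" "v - sb *\<^sub>R b \<in> C"
    using assms(3,4) unfolding absorbs_def by blast
  define s where "s = min sa sb"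
  have "v - s *\<^sub>R a \<in> C" "v - s *\<^sub>R b \<in> C"
    using convexD[OF assms(1) assms(2) \<open>v - sa *\<^sub>R a \<in> C\<close>, of "1 - s / sa" "s / sa"]
      convexD[OF assms(1) assms(2) \<open>v - sb *\<^sub>R b \<in> C\<close>, of "1 - s / sb" "s / sb"]
      \<open>sa > 0\<close> \<open>sb > 0\<close>
    by (auto simp: s_def algebra_simps)
  moreover have "v - (s / 2) *\<^sub>R (a + b) = (1/2) *\<^sub>R (v - s *\<^sub>R a) + (1/2) *\<^sub>R (v - s *\<^sub>R b)"
    by (simp add: algebra_simps flip: scaleR_add_left)
  ultimately have "v - (s / 2) *\<^sub>R (a + b) \<in> C"
    using assms(1) by (simp add: convexD)
  then show ?thesis
    unfolding absorbs_def using \<open>sa > 0\<close> \<open>sb > 0\<close> by (intro exI[of _ "s / 2"]) (auto simp: s_def)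
qed

lemma absorbs_add_left:
  assumes "convex_cone C" "w \<in> C" "absorbs C v m"
  shows "absorbs C (v + w) m"
proof -
  obtain s where "s > 0" "v - s *\<^sub>R m \<in> C"
    using assms(3) unfolding absorbs_def by blast
  moreover have "v + w - s *\<^sub>R m = (v - s *\<^sub>R m) + w"
    by simp
  ultimately show ?thesis
    unfolding absorbs_def using assms(1,2) by (metis convex_cone_add)
qed

lemma absorbs_scaleR_left:
  assumes "convex_cone C" "0 < c" "absorbs C v m"
  shows "absorbs C (c *\<^sub>R v) m"
proof -
  obtain s where "s > 0" "v - s *\<^sub>R m \<in> C"
    using assms(3) unfolding absorbs_def by blast
  moreover have "c *\<^sub>R v - (c * s) *\<^sub>R m = c *\<^sub>R (v - s *\<^sub>R m)"
    by (simp add: algebra_simps)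
  ultimately show ?thesis
    unfolding absorbs_def using assms(1,2)
    by (metis convex_cone_scaleR less_eq_real_def mult_pos_pos)
qed

lemma convex_cone_absorbed:
  assumes "convex_cone C" "v \<in> C"
  shows "convex_cone {w. absorbs C v w}"
proof -
  have "convex C"
    using assms(1) by (simp add: convex_cone_def)
  have "absorbs C v (c *\<^sub>R w)" if "absorbs C v w" "0 \<le> c" for w c
  proof (cases "c = 0")
    case True
    then show ?thesis
      using assms(2) absorbs_zero by simp
  next
    case False
    with that show ?thesis
      by (intro absorbs_scaleR_right) auto
  qed
  then show ?thesis
    unfolding convex_cone_iff
    using absorbs_zero absorbs_add_right[OF \<open>convex C\<close>] assms(2) by auto
qed

lemma absorbs_convex_cone_hull:
  assumes "v \<in> convex_cone hull S" "\<And>x. x \<in> S \<Longrightarrow> absorbs (convex_cone hull S) v x"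
    and "w \<in> convex_cone hull S"
  shows "absorbs (convex_cone hull S) v w"
proof -
  have "convex_cone hull S \<subseteq> {w. absorbs (convex_cone hull S) v w}"
    using assms(1,2) by (intro hull_minimal convex_cone_absorbed convex_cone_convex_cone_hull) auto
  then show ?thesis
    using assms(3) by blast
qed

lemma convex_cone_hull_absorbs_generator:
  assumes "v \<in> convex_cone hull S" "v \<noteq> 0"
  obtains m where "m \<in> S" "m \<noteq> 0" "absorbs (convex_cone hull S) v m"
proof -
  let ?C = "convex_cone hull S"
  let ?A = "{v \<in> ?C. v = 0 \<or> (\<exists>m\<in>S. m \<noteq> 0 \<and> absorbs ?C v m)}"
  have "?C \<subseteq> ?A"
  proof (rule hull_minimal)
    show "S \<subseteq> ?A"
      using absorbs_self[OF convex_cone_hull_contains_0] by (auto intro: hull_inc)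
    have add: "v + w \<in> ?A" if v: "v \<in> ?A" and w: "w \<in> ?A" for v w
    proof (cases "v = 0")
      case True
      with w show ?thesis
        by simp
    next
      case False
      with v obtain m where "m \<in> S" "m \<noteq> 0" "absorbs ?C v m"
        by blast
      moreover have "w \<in> ?C"
        using w by blast
      ultimately have "absorbs ?C (v + w) m"
        using absorbs_add_left[OF convex_cone_convex_cone_hull] by blast
      with v w \<open>m \<in> S\<close> \<open>m \<noteq> 0\<close> show ?thesis
        by (auto intro: convex_cone_hull_add)
    qed
    have scale: "c *\<^sub>R v \<in> ?A" if v: "v \<in> ?A" and "0 \<le> c" for v c
    proof (cases "c = 0 \<or> v = 0")
      case True
      then show ?thesis
        by (auto intro: convex_cone_hull_contains_0)
    next
      case False
      with v obtain m where "m \<in> S" "m \<noteq> 0" "absorbs ?C v m"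
        by blast
      moreover have "0 < c"
        using \<open>0 \<le> c\<close> False by simp
      ultimately have "absorbs ?C (c *\<^sub>R v) m"
        using absorbs_scaleR_left[OF convex_cone_convex_cone_hull] by blast
      with v \<open>0 \<le> c\<close> \<open>m \<in> S\<close> \<open>m \<noteq> 0\<close> show ?thesis
        by (auto intro: convex_cone_hull_mul)
    qed
    show "convex_cone ?A"
      unfolding convex_cone_iff[of ?A]
      by (intro conjI ballI allI impI add scale) (simp_all add: convex_cone_hull_contains_0)
  qed
  then show ?thesis
    using assms that by blast
qed

lemma rel_interior_convex_cone_iff:
  fixes C :: "'a::euclidean_space set"
  assumes "convex_cone C"
  shows "v \<in> rel_interior C \<longleftrightarrow> v \<in> C \<and> (\<forall>x\<in>C. absorbs C v x)"
proof -
  have "convex C" "C \<noteq> {}"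
    using assms by (auto simp: convex_cone_def)
  have "(\<exists>e>1. (1 - e) *\<^sub>R x + e *\<^sub>R v \<in> C) \<longleftrightarrow> absorbs C v x" if "v \<in> C" for x
  proof
    assume "\<exists>e>1. (1 - e) *\<^sub>R x + e *\<^sub>R v \<in> C"
    then obtain e where "e > 1" "(1 - e) *\<^sub>R x + e *\<^sub>R v \<in> C"
      by blast
    then have "(1 / e) *\<^sub>R ((1 - e) *\<^sub>R x + e *\<^sub>R v) \<in> C"
      using assms by (simp add: convex_cone_scaleR)
    moreover have "(1 / e) *\<^sub>R ((1 - e) *\<^sub>R x + e *\<^sub>R v) = v - ((e - 1) / e) *\<^sub>R x"
      using \<open>e > 1\<close>
      by (simp add: scaleR_add_right diff_divide_distrib algebra_simps flip: scaleR_add_left)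
    ultimately show "absorbs C v x"
      unfolding absorbs_def using \<open>e > 1\<close> by (intro exI[of _ "(e - 1) / e"]) auto
  next
    assume "absorbs C v x"
    then obtain s where "s > 0" "v - s *\<^sub>R x \<in> C"
      unfolding absorbs_def by blast
    have "(1 - (1 + s)) *\<^sub>R x + (1 + s) *\<^sub>R v = (v - s *\<^sub>R x) + s *\<^sub>R v"
      by (simp add: algebra_simps)
    also have "\<dots> \<in> C"
      using assms \<open>v \<in> C\<close> \<open>s > 0\<close> \<open>v - s *\<^sub>R x \<in> C\<close>
      by (simp add: convex_cone_add convex_cone_scaleR)
    finally show "\<exists>e>1. (1 - e) *\<^sub>R x + e *\<^sub>R v \<in> C"
      using \<open>s > 0\<close> by (intro exI[of _ "1 + s"]) auto
  qed
  then show ?thesis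
    using convex_rel_interior_iff[OF \<open>convex C\<close> \<open>C \<noteq> {}\<close>] rel_interior_subset by blast
qed

lemma convex_cone_supporting_hyperplane:
  fixes C :: "'a::euclidean_space set"
  assumes "convex_cone C" "v \<in> C" "v \<notin> rel_interior C"
  obtains a y where "\<And>x. x \<in> C \<Longrightarrow> 0 \<le> a \<bullet> x" "a \<bullet> v = 0" "y \<in> C" "a \<bullet> y \<noteq> 0"
proof -
  have "convex C" "C \<noteq> {}"
    using assms(1) by (auto simp: convex_cone_def)
  obtain a where le: "\<And>x. x \<in> C \<Longrightarrow> a \<bullet> v \<le> a \<bullet> x"
    and less: "\<And>x. x \<in> rel_interior C \<Longrightarrow> a \<bullet> v < a \<bullet> x"
    using supporting_hyperplane_relative_frontier[OF \<open>convex C\<close> _ assms(3)] assms(2)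
    by (metis closure_subset subsetD)
  have "a \<bullet> v \<le> 0"
    using le[of 0] assms(1) by (simp add: convex_cone_contains_0)
  moreover have "a \<bullet> v \<le> 2 * (a \<bullet> v)"
    using le[of "2 *\<^sub>R v"] assms(1,2) by (simp add: convex_cone_scaleR)
  ultimately have "a \<bullet> v = 0"
    by linarith
  moreover obtain y where "y \<in> rel_interior C"
    using rel_interior_eq_empty \<open>convex C\<close> \<open>C \<noteq> {}\<close> by blast
  ultimately show ?thesis
    using that[of a y] le less rel_interior_subset by fastforce
qed

lemma absorbs_inner_eq_0:
  assumes "\<And>x. x \<in> C \<Longrightarrow> 0 \<le> a \<bullet> x" "a \<bullet> v = 0" "absorbs C v m" "m \<in> C"
  shows "a \<bullet> m = 0"
proof -
  obtain s where "s > 0" "v - s *\<^sub>R m \<in> C"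
    using assms(3) unfolding absorbs_def by blast
  have "s * (a \<bullet> m) + a \<bullet> (v - s *\<^sub>R m) = 0"
    using assms(2) by (simp add: inner_diff_right)
  moreover have "0 \<le> a \<bullet> m" "0 \<le> a \<bullet> (v - s *\<^sub>R m)"
    using assms(1,4) \<open>v - s *\<^sub>R m \<in> C\<close> by auto
  ultimately show ?thesis
    using \<open>s > 0\<close> by (simp add: add_nonneg_eq_0_iff)
qed

lemma finite_bounded_integer_vectors:
  "finite {v :: real ^ 'n. (\<forall>i. v $ i \<in> \<int>) \<and> norm v \<le> B}"
proof -
  let ?S = "{v :: real ^ 'n. (\<forall>i. v $ i \<in> \<int>) \<and> norm v \<le> B}"
  have "uniform_discrete ?S"
    unfolding uniform_discrete_def
  proof (intro exI[of _ 1] conjI ballI impI)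
    fix x y assume "x \<in> ?S" "y \<in> ?S" "dist x y < 1"
    have "x $ i = y $ i" for i
    proof -
      have "\<bar>x $ i - y $ i\<bar> < 1"
        using component_le_norm_cart[of "x - y" i] \<open>dist x y < 1\<close> by (simp add: dist_norm)
      moreover have "x $ i - y $ i \<in> \<int>"
        using \<open>x \<in> ?S\<close> \<open>y \<in> ?S\<close> by simp
      ultimately show ?thesis
        using Ints_nonzero_abs_less1 by fastforce
    qed
    then show "x = y"
      by (simp add: vec_eq_iff)
  qed simp
  moreover have "bounded ?S"
    unfolding bounded_iff by blast
  ultimately show ?thesis
    using uniform_discrete_finite_iff by blast
qed

lemma norm_sum_frac_scaleR_le: "norm (\<Sum>m\<in>S. frac (c m) *\<^sub>R m) \<le> (\<Sum>m\<in>S. norm m)"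
proof -
  have "norm (frac (c m) *\<^sub>R m) \<le> norm m" for m
    using frac_lt_1[of "c m"] by (simp add: mult_left_le_one_le)
  then show ?thesis
    by (simp add: sum_norm_le)
qed

lemma floor_residues_repeat:
  fixes x y :: "real ^ 'n" and e :: real and c :: "real ^ 'n \<Rightarrow> real"
  assumes "finite S" "y = e *\<^sub>R x + (\<Sum>m\<in>S. c m *\<^sub>R m)"
    and "\<forall>i. x $ i \<in> \<int>" "\<forall>i. y $ i \<in> \<int>" "\<forall>m\<in>S. \<forall>i. m $ i \<in> \<int>"
  obtains n0 n2 :: nat where "n0 + L \<le> n2"
    "of_nat (n2 - n0) *\<^sub>R y = of_int (\<lfloor>real n2 * e\<rfloor> - \<lfloor>real n0 * e\<rfloor>) *\<^sub>R x
       + (\<Sum>m\<in>S. of_int (\<lfloor>real n2 * c m\<rfloor> - \<lfloor>real n0 * c m\<rfloor>) *\<^sub>R m)"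
proof -
  define r where "r n = of_nat n *\<^sub>R y - of_int \<lfloor>real n * e\<rfloor> *\<^sub>R x
    - (\<Sum>m\<in>S. of_int \<lfloor>real n * c m\<rfloor> *\<^sub>R m)" for n :: nat
  have r_frac: "r n = frac (real n * e) *\<^sub>R x + (\<Sum>m\<in>S. frac (real n * c m) *\<^sub>R m)" for n
    unfolding r_def frac_def assms(2)
    by (simp add: scaleR_diff_left sum_subtractf scaleR_sum_right algebra_simps)
  have "norm (frac t *\<^sub>R x) \<le> norm x" for t
    using frac_lt_1[of t] by (simp add: mult_left_le_one_le)
  then have "norm (r n) \<le> norm x + (\<Sum>m\<in>S. norm m)" for n
    unfolding r_frac by (intro norm_triangle_le add_mono norm_sum_frac_scaleR_le)
  moreover have "r n $ i \<in> \<int>" for n i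
    unfolding r_def using assms(3-5) by (simp add: sum_component Ints_diff Ints_sum Ints_mult)
  ultimately have "range r \<subseteq> {v. (\<forall>i. v $ i \<in> \<int>) \<and> norm v \<le> norm x + (\<Sum>m\<in>S. norm m)}"
    by blast
  then have "finite (range r)"
    using finite_bounded_integer_vectors finite_subset by blast
  then obtain n0 where "infinite {n. r n = r n0}"
    using pigeonhole_infinite[of UNIV r] by auto
  then obtain n2 where "n0 + L \<le> n2" "r n2 = r n0"
    unfolding infinite_nat_iff_unbounded_le by blast
  moreover from this have "of_nat (n2 - n0) *\<^sub>R y = of_int (\<lfloor>real n2 * e\<rfloor> - \<lfloor>real n0 * e\<rfloor>) *\<^sub>R x
       + (\<Sum>m\<in>S. of_int (\<lfloor>real n2 * c m\<rfloor> - \<lfloor>real n0 * c m\<rfloor>) *\<^sub>R m)"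
    unfolding r_def by (simp add: of_nat_diff scaleR_diff_left sum_subtractf algebra_simps)
  ultimately show ?thesis
    using that by blast
qed

lemma integer_vector_nat_multiple:
  fixes x y :: "real ^ 'n" and e :: real and c :: "real ^ 'n \<Rightarrow> real"
  assumes "finite S" "e > 0" "\<forall>m\<in>S. 0 \<le> c m" "y = e *\<^sub>R x + (\<Sum>m\<in>S. c m *\<^sub>R m)"
    and "\<forall>i. x $ i \<in> \<int>" "\<forall>i. y $ i \<in> \<int>" "\<forall>m\<in>S. \<forall>i. m $ i \<in> \<int>"
  obtains D k :: nat and d :: "real ^ 'n \<Rightarrow> nat"
  where "1 \<le> k" "of_nat D *\<^sub>R y = of_nat k *\<^sub>R x + (\<Sum>m\<in>S. of_nat (d m) *\<^sub>R m)"
proof -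
  obtain L :: nat where "1 / e < real L"
    using reals_Archimedean2 by blast
  then have "1 \<le> real L * e"
    using \<open>e > 0\<close> by (simp add: field_simps)
  obtain n0 n2 :: nat where "n0 + L \<le> n2" and eq:
    "of_nat (n2 - n0) *\<^sub>R y = of_int (\<lfloor>real n2 * e\<rfloor> - \<lfloor>real n0 * e\<rfloor>) *\<^sub>R x
       + (\<Sum>m\<in>S. of_int (\<lfloor>real n2 * c m\<rfloor> - \<lfloor>real n0 * c m\<rfloor>) *\<^sub>R m)"
    using floor_residues_repeat[OF assms(1,4-7)] by blast
  have "real n0 * e + 1 \<le> real n2 * e"
  proof -
    have "real (n0 + L) * e \<le> real n2 * e"
      using \<open>n0 + L \<le> n2\<close> \<open>e > 0\<close> by (simp add: mult_right_mono)
    with \<open>1 \<le> L * e\<close> show ?thesis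
      by (simp add: algebra_simps)
  qed
  then have "\<lfloor>real n0 * e + 1\<rfloor> \<le> \<lfloor>real n2 * e\<rfloor>"
    by (rule floor_mono)
  then have k: "1 \<le> \<lfloor>real n2 * e\<rfloor> - \<lfloor>real n0 * e\<rfloor>"
    by simp
  have "\<lfloor>real n0 * c m\<rfloor> \<le> \<lfloor>real n2 * c m\<rfloor>" if "m \<in> S" for m
    using \<open>n0 + L \<le> n2\<close> assms(3) that by (intro floor_mono mult_right_mono) auto
  then have "(\<Sum>m\<in>S. of_int (\<lfloor>real n2 * c m\<rfloor> - \<lfloor>real n0 * c m\<rfloor>) *\<^sub>R m)
      = (\<Sum>m\<in>S. of_nat (nat (\<lfloor>real n2 * c m\<rfloor> - \<lfloor>real n0 * c m\<rfloor>)) *\<^sub>R m)"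
    by (intro sum.cong) auto
  moreover have "real_of_int (\<lfloor>real n2 * e\<rfloor> - \<lfloor>real n0 * e\<rfloor>)
      = of_nat (nat (\<lfloor>real n2 * e\<rfloor> - \<lfloor>real n0 * e\<rfloor>))"
    using k by simp
  ultimately show ?thesis
    using eq k by (intro that[of "nat (\<lfloor>real n2 * e\<rfloor> - \<lfloor>real n0 * e\<rfloor>)" "n2 - n0"]) simp_all
qed

lemma mcone_eq_convex_cone_hull: "mcone M = convex_cone hull M"
  unfolding mcone_def convex_cone_hull_explicit ..

lemma face_of_cone_iff: "face_of_cone F C \<longleftrightarrow> convex_cone F \<and> F face_of C"
  unfolding face_of_cone_def face_of_def convex_cone_def by blast

lemma face_of_cone_supporting_hyperplane:
  assumes "convex_cone C" "\<And>x. x \<in> C \<Longrightarrow> 0 \<le> a \<bullet> x"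
  shows "face_of_cone (C \<inter> {x. a \<bullet> x = 0}) C"
proof -
  have "convex_cone {x. a \<bullet> x = 0}"
    by (simp add: subspace_hyperplane subspace_imp_convex_cone)
  then have "convex_cone (C \<inter> {x. a \<bullet> x = 0})"
    using convex_cone_Inter[of "{C, {x. a \<bullet> x = 0}}"] assms(1) by auto
  moreover have "(C \<inter> {x. a \<bullet> x = 0}) face_of C"
    using assms by (simp add: face_of_Int_supporting_hyperplane_ge convex_cone_def)
  ultimately show ?thesis
    unfolding face_of_cone_iff ..
qed

lemma submonoid_Nd_scaleR_of_nat:
  assumes "submonoid_Nd M" "x \<in> M"
  shows "of_nat n *\<^sub>R x \<in> M"
  using assms unfolding submonoid_Nd_def by (induction n) (auto simp: scaleR_add_left)

lemma submonoid_Nd_sum: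
  assumes "submonoid_Nd M" "finite S" "\<And>x. x \<in> S \<Longrightarrow> f x \<in> M"
  shows "sum f S \<in> M"
  using assms(2,3) assms(1) unfolding submonoid_Nd_def by (induction S rule: finite_induct) auto

lemma submonoid_Nd_Ints:
  assumes "submonoid_Nd M" "x \<in> M"
  shows "x $ i \<in> \<int>"
  using assms Nats_subset_Ints unfolding submonoid_Nd_def by blast

lemma submonoid_Nd_add_eq_0:
  assumes "submonoid_Nd M" "x \<in> M" "y \<in> M" "x + y = 0"
  shows "x = 0"
proof -
  have "x $ i = 0" for i
  proof -
    have "x $ i \<in> \<nat>" "y $ i \<in> \<nat>"
      using assms unfolding submonoid_Nd_def by auto
    moreover have "x $ i + y $ i = 0"
      using assms(4) by (metis vector_add_component zero_index)
    ultimately show ?thesis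
      by (metis Nats_cases add_nonneg_eq_0_iff of_nat_0_le_iff)
  qed
  then show ?thesis
    by (simp add: vec_eq_iff)
qed

lemma primary_absorbs:
  assumes "submonoid_Nd M" "primary M" "x \<in> M" "x \<noteq> 0" "y \<in> M"
  shows "absorbs (mcone M) x y"
proof (cases "y = 0")
  case True
  then show ?thesis
    using assms(3) unfolding absorbs_def mcone_eq_convex_cone_hull
    by (intro exI[of _ 1]) (simp add: hull_inc)
next
  case False
  then obtain n k where "k \<in> M" and nx: "of_nat n *\<^sub>R x = y + k"
    using assms unfolding primary_def by blast
  have "n \<noteq> 0"
  proof
    assume "n = 0"
    with nx have "y + k = 0"
      by simp
    with submonoid_Nd_add_eq_0[OF assms(1,5) \<open>k \<in> M\<close>] False show False
      by blast
  qed
  then have "x - (1 / of_nat n) *\<^sub>R y = (1 / of_nat n) *\<^sub>R k"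
    using arg_cong[OF nx, of "scaleR (1 / of_nat n)"] by (simp add: algebra_simps)
  moreover have "(1 / of_nat n) *\<^sub>R k \<in> mcone M"
    unfolding mcone_eq_convex_cone_hull using \<open>k \<in> M\<close>
    by (simp add: convex_cone_hull_mul hull_inc)
  ultimately show ?thesis
    unfolding absorbs_def using \<open>n \<noteq> 0\<close> by (intro exI[of _ "1 / of_nat n"]) auto
qed

lemma primary_imp_subset_rel_interior:
  assumes "submonoid_Nd M" "primary M"
  shows "mcone M - {0} \<subseteq> rel_interior (mcone M)"
proof
  fix v assume v: "v \<in> mcone M - {0}"
  then obtain m where m: "m \<in> M" "m \<noteq> 0" "absorbs (mcone M) v m"
    unfolding mcone_eq_convex_cone_hull using convex_cone_hull_absorbs_generator by blast
  have "absorbs (mcone M) v y" if "y \<in> M" for y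
    using absorbs_trans[OF _ m(3) primary_absorbs[OF assms m(1,2) that]]
    by (simp add: mcone_eq_convex_cone_hull convex_cone_convex_cone_hull)
  then have "\<forall>x\<in>mcone M. absorbs (mcone M) v x"
    using v unfolding mcone_eq_convex_cone_hull by (blast intro: absorbs_convex_cone_hull)
  then show "v \<in> rel_interior (mcone M)"
    using v unfolding mcone_eq_convex_cone_hull
    by (simp add: rel_interior_convex_cone_iff convex_cone_convex_cone_hull)
qed

lemma subset_rel_interior_imp_primary:
  assumes M: "submonoid_Nd M" and "M \<noteq> {0}"
    and rel_int: "mcone M - {0} \<subseteq> rel_interior (mcone M)"
  shows "primary M"
  unfolding primary_def
proof (intro conjI ballI assms(2))
  fix x y assume x: "x \<in> M - {0}" and y: "y \<in> M - {0}"
  have "y \<in> rel_interior (mcone M)" "x \<in> mcone M"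
    using rel_int x y unfolding mcone_eq_convex_cone_hull by (auto intro: hull_inc)
  then have "absorbs (mcone M) y x"
    unfolding mcone_eq_convex_cone_hull
    by (simp add: rel_interior_convex_cone_iff convex_cone_convex_cone_hull)
  then obtain e where "e > 0" "y - e *\<^sub>R x \<in> mcone M"
    unfolding absorbs_def by blast
  then obtain S c where S: "finite S" "S \<subseteq> M" "\<forall>m\<in>S. 0 \<le> c m"
    and "y - e *\<^sub>R x = (\<Sum>m\<in>S. c m *\<^sub>R m)"
    unfolding mcone_def by blast
  then have "y = e *\<^sub>R x + (\<Sum>m\<in>S. c m *\<^sub>R m)"
    by (metis add.commute diff_add_cancel)
  moreover have "\<forall>i. x $ i \<in> \<int>" "\<forall>i. y $ i \<in> \<int>" "\<forall>m\<in>S. \<forall>i. m $ i \<in> \<int>"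
    using submonoid_Nd_Ints[OF M] x y S(2) by auto
  ultimately obtain D k :: nat and d where "1 \<le> k"
    and Dy: "of_nat D *\<^sub>R y = of_nat k *\<^sub>R x + (\<Sum>m\<in>S. of_nat (d m) *\<^sub>R m)"
    by (rule integer_vector_nat_multiple[OF S(1) \<open>e > 0\<close> S(3)])
  have "of_nat k *\<^sub>R x = x + of_nat (k - 1) *\<^sub>R x"
    using \<open>1 \<le> k\<close> by (simp add: of_nat_diff scaleR_diff_left)
  with Dy have "of_nat D *\<^sub>R y = x + (of_nat (k - 1) *\<^sub>R x + (\<Sum>m\<in>S. of_nat (d m) *\<^sub>R m))"
    by simp
  moreover have "of_nat (k - 1) *\<^sub>R x \<in> M" "(\<Sum>m\<in>S. of_nat (d m) *\<^sub>R m) \<in> M"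
    using x S(2) by (auto intro!: submonoid_Nd_scaleR_of_nat[OF M] submonoid_Nd_sum[OF M S(1)])
  then have "of_nat (k - 1) *\<^sub>R x + (\<Sum>m\<in>S. of_nat (d m) *\<^sub>R m) \<in> M"
    using M unfolding submonoid_Nd_def by blast
  ultimately show "\<exists>n. \<exists>m\<in>M. of_nat n *\<^sub>R y = x + m"
    by blast
qed

lemma trivial_faces_imp_subset_rel_interior:
  assumes faces: "\<forall>N. face_submonoid N M \<longrightarrow> N = {0} \<or> N = M"
  shows "mcone M - {0} \<subseteq> rel_interior (mcone M)"
proof
  let ?C = "convex_cone hull M"
  fix v assume v: "v \<in> mcone M - {0}"
  show "v \<in> rel_interior (mcone M)"
  proof (rule ccontr)
    assume "v \<notin> rel_interior (mcone M)"
    then obtain a y where nonneg: "\<And>x. x \<in> ?C \<Longrightarrow> 0 \<le> a \<bullet> x"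
      and "a \<bullet> v = 0" "y \<in> ?C" "a \<bullet> y \<noteq> 0"
      using v convex_cone_supporting_hyperplane[OF convex_cone_convex_cone_hull]
      unfolding mcone_eq_convex_cone_hull by blast
    let ?F = "?C \<inter> {x. a \<bullet> x = 0}"
    obtain m where m: "m \<in> M" "m \<noteq> 0" "absorbs ?C v m"
      using v convex_cone_hull_absorbs_generator unfolding mcone_eq_convex_cone_hull by blast
    then have "a \<bullet> m = 0"
      using absorbs_inner_eq_0[OF nonneg \<open>a \<bullet> v = 0\<close>] by (simp add: hull_inc)
    have "face_of_cone ?F ?C"
      using face_of_cone_supporting_hyperplane[OF convex_cone_convex_cone_hull] nonneg by blast
    then have "face_submonoid (M \<inter> ?F) M"
      unfolding face_submonoid_def mcone_eq_convex_cone_hull by blast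
    moreover have "m \<in> M \<inter> ?F"
      using m \<open>a \<bullet> m = 0\<close> by (simp add: hull_inc)
    ultimately have "M \<subseteq> {x. a \<bullet> x = 0}"
      using faces m(2) by blast
    then have "?C \<subseteq> {x. a \<bullet> x = 0}"
      by (simp add: hull_minimal subspace_hyperplane subspace_imp_convex_cone)
    then show False
      using \<open>y \<in> ?C\<close> \<open>a \<bullet> y \<noteq> 0\<close> by blast
  qed
qed

lemma subset_rel_interior_imp_trivial_faces:
  assumes "submonoid_Nd M" "mcone M - {0} \<subseteq> rel_interior (mcone M)" "face_submonoid N M"
  shows "N = {0} \<or> N = M"
proof -
  obtain F where F: "convex_cone F" "F face_of mcone M" and N: "N = M \<inter> F"
    using assms(3) unfolding face_submonoid_def face_of_cone_iff by blast
  have "0 \<in> N"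
    using assms(1) F(1) N by (simp add: submonoid_Nd_def convex_cone_contains_0)
  show ?thesis
  proof (cases "N = {0}")
    case False
    then obtain m where "m \<in> N" "m \<noteq> 0"
      using \<open>0 \<in> N\<close> by auto
    then have "m \<in> M" "m \<in> F" "m \<noteq> 0"
      using N by auto
    then have "m \<in> F \<inter> rel_interior (mcone M)"
      using assms(2) by (auto simp: mcone_eq_convex_cone_hull hull_inc)
    then have "mcone M \<subseteq> F"
      using subset_of_face_of[OF F(2) order_refl] by blast
    then have "M \<subseteq> F"
      unfolding mcone_eq_convex_cone_hull using hull_subset by fastforce
    then have "N = M"
      using N by auto
    then show ?thesis ..
  qed simp
qed

theorem mainTheorem13:
  fixes M :: "(real ^ 'n) set"
  assumes "submonoid_Nd M" and "M \<noteq> {0}"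
  shows "(primary M \<longleftrightarrow> (\<forall>N. face_submonoid N M \<longrightarrow> N = {0} \<or> N = M))
       \<and> ((\<forall>N. face_submonoid N M \<longrightarrow> N = {0} \<or> N = M) \<longleftrightarrow>
            openin (top_of_set (span M)) (mcone M - {0}))"
proof -
  let ?interior = "mcone M - {0} \<subseteq> rel_interior (mcone M)"
  have "primary M \<longleftrightarrow> ?interior"
    using primary_imp_subset_rel_interior[OF assms(1)] subset_rel_interior_imp_primary[OF assms]
    by blast
  moreover have "(\<forall>N. face_submonoid N M \<longrightarrow> N = {0} \<or> N = M) \<longleftrightarrow> ?interior"
    using trivial_faces_imp_subset_rel_interior subset_rel_interior_imp_trivial_faces[OF assms(1)]
    by blast
  moreover have "openin (top_of_set (span M)) (mcone M - {0}) \<longleftrightarrow> ?interior"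
    using openin_delete_iff_subset_rel_interior[of "mcone M" 0]
    by (simp add: mcone_eq_convex_cone_hull affine_hull_convex_cone_hull)
  ultimately show ?thesis
    by blast
qed

end
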